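(* Under the assumptions (A0a) and (A1) stated in the context, the uniform Law of Large Numbers holds: \[ \lim_{T\to\infty} \sup_{\theta, z_0} \frac{1}{1+\|\theta\|} \left| \frac{1}{T}\int_0^T \bigl[f(\theta,\xi_t) - \bar f(\theta)\bigr]\, dt \right| = 0, \] where the supremum is over $\theta\in\mathbb{R}^d$ and initial conditions $\Phi_0 = z_0\in\Omega$.
   Context: Let $f\colon\mathbb{R}^d\times\mathbb{R}^m\to\mathbb{R}^d$ be continuous. The clock process $\Phi$ has $K$ entries $\Phi^i_t = \exp(2\pi j[\omega_i t+\phi_i])$ with positive frequencies $\omega_i$ and phases $\phi_i$; it solves $\frac{d}{dt}\Phi_t = W\Phi_t$ with $W = 2\pi j\,\mathrm{diag}(\omega_i)$ and evolves on a compact set $\Omega\subset\mathbb{C}^K$, with invariant (uniform) distribution $\pi$ on $\Omega$. Let $\xi^0_t = [\cos(2\pi[\omega_1 t+\phi_1]),\dots,\cos(2\pi[\omega_K t+\phi_K])]^\intercal$. (A0a): the probing signal is $\xi_t = G_0(\xi^0_t)$ for all $t$, where $G_0\colon\mathbb{R}^K\to\mathbb{R}^m$ is analytic with absolutely summable Taylor series coefficients for $G_0(\xi^0_t)$; equivalently $\xi_t = G(\Phi_t)$ with $G(z) = G_0((z+1/z)/2)$. The mean vector field is $\bar f(\theta) = \mathsf{E}[f(\theta,G(\Phi))]$ with $\Phi\sim\pi$. (A1): $f$ and $\bar f$ are Lipschitz: for a constant $L_f<\infty$, $\|\bar f(\theta')-\bar f(\theta)\|\le L_f\|\theta'-\theta\|$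 and $\|f(\theta',\xi)-f(\theta,\xi)\| + \|f(\theta,\xi')-f(\theta,\xi)\| \le L_f[\|\theta'-\theta\|+\|\xi'-\xi\|]$ for all $\theta,\theta'\in\mathbb{R}^d$, $\xi,\xi'\in\mathbb{R}^m$. *)

theory Defs
  imports "HOL-Analysis.Analysis" "HOL-Probability.Probability"
begin

text \<open>Clock process. Components indexed by a finite type 'k (K = CARD('k)).
  Flow of dPhi/dt = W Phi with W = 2 pi j diag(omega_i): z maps to exp(W t) z.\<close>
definition clock_flow :: "('k::finite \<Rightarrow> real) \<Rightarrow> real \<Rightarrow> complex^'k \<Rightarrow> complex^'k" where
  "clock_flow \<omega> t z = (\<chi> i. exp (2 * of_real pi * \<i> * of_real (\<omega> i * t)) * z$i)"

definition clock :: "('k::finite \<Rightarrow> real) \<Rightarrow> ('k \<Rightarrow> real) \<Rightarrow> real \<Rightarrow> complex^'k" where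
  "clock \<omega> \<phi> t = (\<chi> i. exp (2 * of_real pi * \<i> * of_real (\<omega> i * t + \<phi> i)))"

definition clock_set :: "('k::finite \<Rightarrow> real) \<Rightarrow> ('k \<Rightarrow> real) \<Rightarrow> (complex^'k) set" where
  "clock_set \<omega> \<phi> = closure (range (clock \<omega> \<phi>))"

text \<open>G(z) = G0((z + 1/z)/2); for z on Omega (unit-modulus entries) the argument is real.\<close>
definition G_of :: "(real^'k::finite \<Rightarrow> 'b) \<Rightarrow> complex^'k \<Rightarrow> 'b" where
  "G_of G0 z = G0 (\<chi> i. Re ((z$i + inverse (z$i)) / 2))"

definition monom_mi :: "real^'k::finite \<Rightarrow> ('k \<Rightarrow> nat) \<Rightarrow> real" where
  "monom_mi x \<alpha> = (\<Prod>i\<in>UNIV. (x$i) ^ (\<alpha> i))"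

definition real_analytic :: "(real^'k::finite \<Rightarrow> 'b::banach) \<Rightarrow> bool" where
  "real_analytic g \<longleftrightarrow> (\<forall>x0. \<exists>r>0. \<exists>a :: ('k \<Rightarrow> nat) \<Rightarrow> 'b.
      \<forall>x. (\<forall>i. \<bar>x$i - x0$i\<bar> < r) \<longrightarrow>
        (\<lambda>\<alpha>. norm (monom_mi (x - x0) \<alpha> *\<^sub>R a \<alpha>)) summable_on UNIV \<and>
        ((\<lambda>\<alpha>. monom_mi (x - x0) \<alpha> *\<^sub>R a \<alpha>) has_sum g x) UNIV)"

text \<open>The Taylor series of g at 0 has absolutely summable coefficients: the coefficients
  c of the power series representing g near 0 (unique, hence the Taylor coefficients)
  satisfy sum of norm (c alpha) < infinity.\<close>
definition taylor_abs_summable :: "(real^'k::finite \<Rightarrow> 'b::banach) \<Rightarrow> bool" where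
  "taylor_abs_summable g \<longleftrightarrow> (\<exists>r>0. \<exists>c :: ('k \<Rightarrow> nat) \<Rightarrow> 'b.
      (\<lambda>\<alpha>. norm (c \<alpha>)) summable_on UNIV \<and>
      (\<forall>x. (\<forall>i. \<bar>x$i\<bar> < r) \<longrightarrow> ((\<lambda>\<alpha>. monom_mi x \<alpha> *\<^sub>R c \<alpha>) has_sum g x) UNIV))"

end

theory Submission
  imports Defs
begin

text \<open>
  For a character \<open>z \<mapsto> z\<^sup>n\<close> of the torus the flow multiplies by \<open>exp (2\<pi>i \<langle>n, \<omega>\<rangle> t)\<close>:
  if \<open>\<langle>n, \<omega>\<rangle> = 0\<close> the character is constant on the orbit closure \<open>\<Omega>\<close>, otherwise its time
  average is \<open>O(1/T)\<close> uniformly on \<open>\<Omega>\<close> while invariance of \<open>\<pi>\<close> forces its integral to vanish.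
  On the torus real polynomials in \<open>Re z\<close>, \<open>Im z\<close> are trigonometric polynomials, and the error
  \<open>h \<mapsto> time average - \<integral>h d\<pi>\<close> is linear and bounded by twice the supremum of \<open>h\<close> on \<open>\<Omega>\<close>;
  so Stone-Weierstrass gives uniform convergence of time averages for every continuous \<open>h\<close>.

  Uniformity in \<open>\<theta>\<close>: since \<open>f \<theta>\<close> is \<open>L\<^sub>f\<close>-Lipschitz and \<open>z \<mapsto> G\<^sub>0 (Re z)\<close>, which agrees with
  \<open>G\<close> on the torus, is uniformly continuous on the compact set \<open>\<Omega>\<close>, the family
  \<open>z \<mapsto> f \<theta> (G z)\<close> is totally bounded in the supremum norm modulo constants, and the error
  ignores constants. Neither are positivity
  of \<open>\<omega>\<close>, summability of the Taylor coefficients, nor the Lipschitz bound on \<open>fbar\<close>: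
  analyticity is only used to make \<open>G\<^sub>0\<close> continuous.
\<close>

lemma real_analytic_continuous:
  fixes g :: "real^'k::finite \<Rightarrow> 'b::banach"
  assumes "real_analytic g"
  shows "continuous_on UNIV g"
proof -
  have "isCont g x0" for x0
  proof -
    obtain r a where "r > 0" and series: "\<And>x. (\<forall>i. \<bar>x$i - x0$i\<bar> < r) \<Longrightarrow>
        (\<lambda>\<alpha>. norm (monom_mi (x - x0) \<alpha> *\<^sub>R a \<alpha>)) summable_on UNIV \<and>
        ((\<lambda>\<alpha>. monom_mi (x - x0) \<alpha> *\<^sub>R a \<alpha>) has_sum g x) UNIV"
      using assms unfolding real_analytic_def by metis
    define \<rho> where "\<rho> = r / 2"
    have "\<rho> > 0" "\<rho> < r" using \<open>r > 0\<close> by (auto simp: \<rho>_def)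
    define y where "y = x0 + (\<chi> i. \<rho>)"
    have near: "\<bar>x$i - x0$i\<bar> \<le> \<rho>" if "x \<in> cball x0 \<rho>" for x i
      using that component_le_norm_cart[of "x - x0" i] by (simp add: dist_norm norm_minus_commute)
    have "uniform_limit (cball x0 \<rho>) (\<lambda>A x. \<Sum>\<alpha>\<in>A. monom_mi (x - x0) \<alpha> *\<^sub>R a \<alpha>) g
        (finite_subsets_at_top UNIV)"
    proof (rule Weierstrass_m_test_general')
      fix \<alpha> x assume "x \<in> cball x0 \<rho>"
      then have "\<bar>monom_mi (x - x0) \<alpha>\<bar> \<le> monom_mi (y - x0) \<alpha>"
        unfolding monom_mi_def abs_prod
        using near \<open>\<rho> > 0\<close> by (auto simp: y_def power_abs intro!: prod_mono power_mono)
      then show "norm (monom_mi (x - x0) \<alpha> *\<^sub>R a \<alpha>) \<le> norm (monom_mi (y - x0) \<alpha> *\<^sub>R a \<alpha>)"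
        by (auto intro!: mult_right_mono)
    next
      show "(\<lambda>\<alpha>. norm (monom_mi (y - x0) \<alpha> *\<^sub>R a \<alpha>)) summable_on UNIV"
        using series[of y] \<open>\<rho> > 0\<close> \<open>\<rho> < r\<close> by (simp add: y_def)
      show "((\<lambda>\<alpha>. monom_mi (x - x0) \<alpha> *\<^sub>R a \<alpha>) has_sum g x) UNIV" if "x \<in> cball x0 \<rho>" for x
        using series[of x] near[OF that] \<open>\<rho> < r\<close> by (meson le_less_trans)
    qed
    then have "continuous_on (cball x0 \<rho>) g"
      by (rule uniform_limit_theorem[rotated])
        (simp_all add: monom_mi_def always_eventually continuous_on_sum continuous_on_scaleR
          continuous_on_prod continuous_on_power continuous_on_component continuous_on_diff)
    then show ?thesis
      using \<open>\<rho> > 0\<close> by (metis centre_in_ball continuous_on_interior interior_cball)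
  qed
  then show ?thesis by (simp add: continuous_on_eq_continuous_at)
qed

lemma norm_diff_le_if_floor_eq:
  fixes x y :: "'a::euclidean_space" and \<eta> :: real
  assumes "\<eta> > 0" and "\<And>b. b \<in> Basis \<Longrightarrow> \<lfloor>x \<bullet> b / \<eta>\<rfloor> = \<lfloor>y \<bullet> b / \<eta>\<rfloor>"
  shows "norm (x - y) \<le> DIM('a) * \<eta>"
proof -
  have "\<bar>(x - y) \<bullet> b\<bar> \<le> \<eta>" if "b \<in> Basis" for b
  proof -
    have "\<bar>x \<bullet> b / \<eta> - y \<bullet> b / \<eta>\<bar> < 1"
      using assms(2)[OF that] by linarith
    then show ?thesis
      using \<open>\<eta> > 0\<close> by (simp add: inner_diff_left diff_divide_distrib[symmetric])
  qed
  then have "(\<Sum>b\<in>Basis. \<bar>(x - y) \<bullet> b\<bar>) \<le> (\<Sum>b\<in>(Basis::'a set). \<eta>)"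
    by (rule sum_mono)
  then show ?thesis
    using norm_le_l1[of "x - y"] by simp
qed

text \<open>Rounding the coordinates to a grid of mesh \<open>e / DIM('b)\<close> sorts the family into
  finitely many classes of pointwise \<open>e\<close>-close members.\<close>
lemma bounded_family_finite_net:
  fixes v :: "'p \<Rightarrow> 'a \<Rightarrow> 'b::euclidean_space"
  assumes "finite N" and bounded: "\<And>\<theta> y. y \<in> N \<Longrightarrow> norm (v \<theta> y) \<le> B" and "e > 0"
  shows "\<exists>\<Theta>. finite \<Theta> \<and> (\<forall>\<theta>. \<exists>\<theta>'\<in>\<Theta>. \<forall>y\<in>N. norm (v \<theta> y - v \<theta>' y) \<le> e)"
proof -
  define \<eta> where "\<eta> = e / DIM('b)"
  have "\<eta> > 0" using \<open>e > 0\<close> by (simp add: \<eta>_def)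
  define M where "M = \<lceil>B / \<eta>\<rceil>"
  define q where "q \<theta> = restrict (\<lambda>y. restrict (\<lambda>b. \<lfloor>v \<theta> y \<bullet> b / \<eta>\<rfloor>) Basis) N" for \<theta>
  have "\<lfloor>v \<theta> y \<bullet> b / \<eta>\<rfloor> \<in> {-M..M}" if "y \<in> N" "b \<in> Basis" for \<theta> y b
  proof -
    have "\<bar>v \<theta> y \<bullet> b\<bar> \<le> B"
      using Basis_le_norm[OF \<open>b \<in> Basis\<close>, of "v \<theta> y"] bounded[OF \<open>y \<in> N\<close>, of \<theta>] by linarith
    then have "\<bar>v \<theta> y \<bullet> b / \<eta>\<bar> \<le> B / \<eta>"
      using \<open>\<eta> > 0\<close> by (simp add: divide_right_mono)
    then show ?thesis
      unfolding M_def atLeastAtMost_iff by linarith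
  qed
  then have "range q \<subseteq> PiE N (\<lambda>_. PiE Basis (\<lambda>_. {-M..M}))"
    by (auto simp: q_def)
  then have "finite (range q)"
    by (rule finite_subset) (intro finite_PiE \<open>finite N\<close> finite_Basis finite_atLeastAtMost_int)
  define rep where "rep p = (SOME \<theta>. q \<theta> = p)" for p
  have "norm (v \<theta> y - v \<theta>' y) \<le> e" if "q \<theta>' = q \<theta>" "y \<in> N" for \<theta> \<theta>' y
  proof -
    have "\<lfloor>v \<theta> y \<bullet> b / \<eta>\<rfloor> = \<lfloor>v \<theta>' y \<bullet> b / \<eta>\<rfloor>" if "b \<in> Basis" for b
      using fun_cong[OF fun_cong[OF \<open>q \<theta>' = q \<theta>\<close>, of y], of b] \<open>y \<in> N\<close> that by (simp add: q_def)
    from norm_diff_le_if_floor_eq[OF \<open>\<eta> > 0\<close> this] show ?thesis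
      by (simp add: \<eta>_def)
  qed
  moreover have "q (rep (q \<theta>)) = q \<theta>" for \<theta>
    unfolding rep_def by (rule someI_ex) blast
  ultimately show ?thesis
    using \<open>finite (range q)\<close> by (intro exI[of _ "rep ` range q"]) blast
qed

lemma close_on_net_imp_close:
  fixes F :: "'p \<Rightarrow> 'a::metric_space \<Rightarrow> 'b::real_normed_vector" and u :: "'a \<Rightarrow> 'c::metric_space"
  assumes lipschitz: "\<And>t x y. x \<in> S \<Longrightarrow> y \<in> S \<Longrightarrow> norm (F t x - F t y) \<le> L * dist (u x) (u y)"
    and "N \<subseteq> S" and net: "\<And>x. x \<in> S \<Longrightarrow> \<exists>y\<in>N. dist (u x) (u y) < \<delta>"
    and close: "\<forall>y\<in>N. norm (F \<theta> y - F \<theta>' y - c) \<le> e" and "x \<in> S"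
  shows "norm (F \<theta> x - F \<theta>' x - c) \<le> 2 * (\<bar>L\<bar> * \<delta>) + e"
proof -
  obtain y where "y \<in> N" and "dist (u x) (u y) < \<delta>" using net \<open>x \<in> S\<close> by blast
  then have "y \<in> S" using \<open>N \<subseteq> S\<close> by blast
  have F_close: "norm (F t x - F t y) \<le> \<bar>L\<bar> * \<delta>" for t
  proof -
    have "norm (F t x - F t y) \<le> L * dist (u x) (u y)"
      using lipschitz \<open>x \<in> S\<close> \<open>y \<in> S\<close> by blast
    also have "\<dots> \<le> \<bar>L\<bar> * \<delta>"
      using \<open>dist (u x) (u y) < \<delta>\<close> by (intro mult_mono) auto
    finally show ?thesis .
  qed
  have "F \<theta> x - F \<theta>' x - c = (F \<theta> x - F \<theta> y) - (F \<theta>' x - F \<theta>' y) + (F \<theta> y - F \<theta>' y - c)"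
    by (simp add: algebra_simps)
  then have "norm (F \<theta> x - F \<theta>' x - c) \<le>
      norm ((F \<theta> x - F \<theta> y) - (F \<theta>' x - F \<theta>' y)) + norm (F \<theta> y - F \<theta>' y - c)"
    by (simp only: norm_triangle_ineq)
  also have "\<dots> \<le> norm (F \<theta> x - F \<theta> y) + norm (F \<theta>' x - F \<theta>' y) + norm (F \<theta> y - F \<theta>' y - c)"
    using norm_triangle_ineq4 by (rule add_right_mono)
  also have "\<dots> \<le> \<bar>L\<bar> * \<delta> + \<bar>L\<bar> * \<delta> + e"
    using F_close close \<open>y \<in> N\<close> by (intro add_mono) auto
  finally show ?thesis by linarith
qed

text \<open>An Arzela-Ascoli type argument.\<close>
lemma finite_net_modulo_constants:
  fixes F :: "'p \<Rightarrow> 'a::metric_space \<Rightarrow> 'b::euclidean_space" and u :: "'a \<Rightarrow> 'c::metric_space"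
  assumes "compact S" "continuous_on S u"
    and lipschitz: "\<And>\<theta> x y. x \<in> S \<Longrightarrow> y \<in> S \<Longrightarrow> norm (F \<theta> x - F \<theta> y) \<le> L * dist (u x) (u y)"
    and "e > 0"
  shows "\<exists>\<Theta>. finite \<Theta> \<and> (\<forall>\<theta>. \<exists>\<theta>'\<in>\<Theta>. \<exists>c. \<forall>x\<in>S. norm (F \<theta> x - F \<theta>' x - c) \<le> e)"
proof (cases "S = {}")
  case True
  then show ?thesis by (intro exI[of _ "{undefined}"]) auto
next
  case False
  then obtain x0 where "x0 \<in> S" by blast
  define \<delta> where "\<delta> = e / (4 * (\<bar>L\<bar> + 1))"
  have "\<delta> > 0" and "2 * (\<bar>L\<bar> * \<delta>) \<le> e / 2"
    using \<open>e > 0\<close> by (simp_all add: \<delta>_def field_simps add_pos_nonneg)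
  obtain r where "r > 0" and r: "\<And>x y. x \<in> S \<Longrightarrow> y \<in> S \<Longrightarrow> dist y x < r \<Longrightarrow> dist (u y) (u x) < \<delta>"
    using compact_uniformly_continuous[OF assms(2,1)] \<open>\<delta> > 0\<close>
    unfolding uniformly_continuous_on_def by metis
  obtain N where "N \<subseteq> S" "finite N" and cover: "S \<subseteq> (\<Union>y\<in>N. ball y r)"
    using compactE_image[OF \<open>compact S\<close>, of S "\<lambda>y. ball y r"] \<open>r > 0\<close> by force
  have net: "\<exists>y\<in>N. dist (u x) (u y) < \<delta>" if "x \<in> S" for x
    using cover r \<open>N \<subseteq> S\<close> that by (fastforce simp: dist_commute)
  define v where "v \<theta> y = F \<theta> y - F \<theta> x0" for \<theta> y
  have v_bounded: "norm (v \<theta> y) \<le> \<bar>L\<bar> * (\<Sum>y\<in>N. dist (u y) (u x0))" if "y \<in> N" for \<theta> y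
  proof -
    have "norm (v \<theta> y) \<le> \<bar>L\<bar> * dist (u y) (u x0)"
      using lipschitz[of y x0 \<theta>] \<open>x0 \<in> S\<close> \<open>N \<subseteq> S\<close> that abs_ge_self[of L]
      unfolding v_def by (meson mult_right_mono order_trans subsetD zero_le_dist)
    also have "\<dots> \<le> \<bar>L\<bar> * (\<Sum>y\<in>N. dist (u y) (u x0))"
      using \<open>finite N\<close> that by (intro mult_left_mono member_le_sum) auto
    finally show ?thesis .
  qed
  have "e / 2 > 0" using \<open>e > 0\<close> by simp
  from bounded_family_finite_net[where v = v and B = "\<bar>L\<bar> * (\<Sum>y\<in>N. dist (u y) (u x0))",
      OF \<open>finite N\<close> v_bounded this]
  obtain \<Theta> where "finite \<Theta>" and \<Theta>: "\<forall>\<theta>. \<exists>\<theta>'\<in>\<Theta>. \<forall>y\<in>N. norm (v \<theta> y - v \<theta>' y) \<le> e / 2"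
    by blast
  have "norm (F \<theta> x - F \<theta>' x - (F \<theta> x0 - F \<theta>' x0)) \<le> e"
    if "\<forall>y\<in>N. norm (v \<theta> y - v \<theta>' y) \<le> e / 2" "x \<in> S" for \<theta> \<theta>' x
  proof -
    have "\<forall>y\<in>N. norm (F \<theta> y - F \<theta>' y - (F \<theta> x0 - F \<theta>' x0)) \<le> e / 2"
      using that(1) by (simp add: v_def algebra_simps)
    from close_on_net_imp_close[OF lipschitz \<open>N \<subseteq> S\<close> net this \<open>x \<in> S\<close>]
    show ?thesis using \<open>2 * (\<bar>L\<bar> * \<delta>) \<le> e / 2\<close> by linarith
  qed
  then show ?thesis using \<open>finite \<Theta>\<close> \<Theta> by meson
qed

lemma uniform_limit_inverse_decay:
  fixes f :: "real \<Rightarrow> 'a \<Rightarrow> 'b::real_normed_vector"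
  assumes "\<forall>\<^sub>F T in at_top. \<forall>x\<in>S. norm (f T x) \<le> C / T"
  shows "uniform_limit S f (\<lambda>_. 0) at_top"
proof (rule uniform_limit_null_comparison[OF assms], rule uniform_limitI)
  fix e :: real assume "e > 0"
  have "((\<lambda>T. C / T) \<longlongrightarrow> 0) at_top"
    by (intro tendsto_divide_0[OF tendsto_const] filterlim_at_top_imp_at_infinity filterlim_ident)
  from tendstoD[OF this \<open>e > 0\<close>]
  show "\<forall>\<^sub>F T in at_top. \<forall>x\<in>S. dist (C / T) 0 < e"
    by (rule eventually_mono) simp
qed

lemma tendsto_SUP_ereal_zero:
  fixes X :: "'t \<Rightarrow> 'p \<Rightarrow> real"
  assumes X: "uniform_limit A X (\<lambda>_. 0) F" and "A \<noteq> {}"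
  shows "((\<lambda>T. SUP p\<in>A. ereal (X T p)) \<longlongrightarrow> 0) F"
proof (rule order_tendstoI)
  fix a :: ereal assume "a < 0"
  then obtain r :: real where "a < r" "r < 0"
    by (metis ereal_dense2 less_ereal.simps(1) zero_ereal_def)
  obtain p where "p \<in> A" using \<open>A \<noteq> {}\<close> by blast
  have "\<forall>\<^sub>F T in F. dist (X T p) 0 < - r"
    using uniform_limitD[OF X, of "- r"] \<open>r < 0\<close> \<open>p \<in> A\<close> by (auto elim: eventually_mono)
  then show "\<forall>\<^sub>F T in F. a < (SUP p\<in>A. ereal (X T p))"
  proof eventually_elim
    case (elim T)
    then have "a < ereal (X T p)" using \<open>a < r\<close> by (auto simp: dist_real_def intro: less_le_trans)
    also have "\<dots> \<le> (SUP p\<in>A. ereal (X T p))" using \<open>p \<in> A\<close> by (rule SUP_upper)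
    finally show ?case .
  qed
next
  fix a :: ereal assume "0 < a"
  then obtain r :: real where "0 < r" "r < a"
    by (metis ereal_dense2 ereal_less(2))
  have "\<forall>\<^sub>F T in F. \<forall>p\<in>A. dist (X T p) 0 < r"
    using uniform_limitD[OF X \<open>0 < r\<close>] .
  then show "\<forall>\<^sub>F T in F. (SUP p\<in>A. ereal (X T p)) < a"
  proof eventually_elim
    case (elim T)
    then have "(SUP p\<in>A. ereal (X T p)) \<le> r" by (intro SUP_least) (auto simp: dist_real_def)
    then show ?case using \<open>r < a\<close> by (rule le_less_trans)
  qed
qed

lemma tendsto_SUP_ereal_zero_dominated:
  fixes X :: "'t \<Rightarrow> 'p \<Rightarrow> real" and E :: "'t \<Rightarrow> 'p \<Rightarrow> 'b::real_normed_vector"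
  assumes E: "uniform_limit A E (\<lambda>_. 0) F" and "A \<noteq> {}"
    and X_le: "\<forall>\<^sub>F T in F. \<forall>p\<in>A. \<bar>X T p\<bar> \<le> norm (E T p)"
  shows "((\<lambda>T. SUP p\<in>A. ereal (X T p)) \<longlongrightarrow> 0) F"
proof (rule tendsto_SUP_ereal_zero[OF uniform_limit_null_comparison \<open>A \<noteq> {}\<close>])
  show "\<forall>\<^sub>F T in F. \<forall>p\<in>A. norm (X T p) \<le> norm (E T p)"
    using X_le by simp
  show "uniform_limit A (\<lambda>T p. norm (E T p)) (\<lambda>_. 0) F"
    using uniform_limit_norm[OF E] by (simp only: norm_zero)
qed

section \<open>The clock and its characters\<close>

definition torus :: "(complex^'k::finite) set" where
  "torus = {z. \<forall>i. norm (z$i) = 1}"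

lemma compact_torus: "compact (torus :: (complex^'k::finite) set)"
proof (rule compact_eq_bounded_closed[THEN iffD2], rule conjI)
  have "norm z \<le> real CARD('k)" if "z \<in> torus" for z :: "complex^'k"
  proof -
    have "norm z \<le> (\<Sum>i\<in>UNIV. norm (z$i))"
      unfolding norm_vec_def by (rule L2_set_le_sum) auto
    then show ?thesis using that by (simp add: torus_def)
  qed
  then show "bounded (torus :: (complex^'k) set)"
    unfolding bounded_iff by blast
  show "closed (torus :: (complex^'k) set)"
    unfolding torus_def by (intro closed_Collect_all closed_Collect_eq continuous_intros)
qed

lemma continuous_on_clock_flow [continuous_intros]:
  "continuous_on S t \<Longrightarrow> continuous_on S z \<Longrightarrow> continuous_on S (\<lambda>x. clock_flow \<omega> (t x) (z x))"
  unfolding clock_flow_def by (intro continuous_intros)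

lemma clock_flow_clock: "clock_flow \<omega> s (clock \<omega> \<phi> t) = clock \<omega> \<phi> (t + s)"
  unfolding clock_flow_def clock_def
  by (simp add: vec_eq_iff exp_add[symmetric] algebra_simps)

lemma clock_in_clock_set: "clock \<omega> \<phi> t \<in> clock_set \<omega> \<phi>"
  unfolding clock_set_def by (simp add: closure_def)

lemma clock_set_subset_torus: "clock_set \<omega> \<phi> \<subseteq> torus"
proof -
  have "range (clock \<omega> \<phi>) \<subseteq> torus"
    by (auto simp: clock_def torus_def)
  then show ?thesis
    unfolding clock_set_def by (simp add: closure_minimal compact_imp_closed compact_torus)
qed

lemma compact_clock_set: "compact (clock_set \<omega> \<phi>)"
  using clock_set_subset_torus compact_torus unfolding clock_set_def
  by (metis bounded_subset closed_closure compact_eq_bounded_closed)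

lemma clock_flow_in_clock_set:
  assumes "z \<in> clock_set \<omega> \<phi>"
  shows "clock_flow \<omega> t z \<in> clock_set \<omega> \<phi>"
proof -
  have "clock_flow \<omega> t ` closure (range (clock \<omega> \<phi>)) \<subseteq> closure (range (clock \<omega> \<phi>))"
    by (rule image_closure_subset)
      (auto simp: clock_flow_clock intro: closure_subset[THEN subsetD]
        continuous_on_clock_flow[OF continuous_on_const continuous_on_id])
  then show ?thesis using assms unfolding clock_set_def by blast
qed

text \<open>Agrees with \<^term>\<open>z powi k\<close> on the unit circle, but is continuous on all of \<^typ>\<open>complex\<close>.\<close>
definition circle_power :: "complex \<Rightarrow> int \<Rightarrow> complex" where
  "circle_power z k = (if 0 \<le> k then z ^ nat k else cnj z ^ nat (- k))"

definition character :: "('k::finite \<Rightarrow> int) \<Rightarrow> complex^'k \<Rightarrow> complex" where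
  "character n z = (\<Prod>i\<in>UNIV. circle_power (z$i) (n i))"

lemma circle_power_eq_powi:
  assumes "norm z = 1"
  shows "circle_power z k = z powi k"
proof -
  have "z * cnj z = 1" using assms complex_norm_square[of z] by simp
  then have "cnj z = inverse z" by (metis inverse_unique)
  then show ?thesis by (simp add: circle_power_def power_int_def)
qed

lemma circle_power_add:
  assumes "norm z = 1"
  shows "circle_power z (a + b) = circle_power z a * circle_power z b"
proof -
  have "z \<noteq> 0" using assms by auto
  then show ?thesis by (simp add: assms circle_power_eq_powi power_int_add)
qed

lemma norm_circle_power: "norm z = 1 \<Longrightarrow> norm (circle_power z k) = 1"
  by (simp add: circle_power_def norm_power)

lemma circle_power_mult: "circle_power (a * b) k = circle_power a k * circle_power b k"
  by (simp add: circle_power_def power_mult_distrib)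

lemma circle_power_cis: "circle_power (exp (\<i> * of_real x)) k = exp (\<i> * of_real (of_int k * x))"
proof (cases "0 \<le> k")
  case True
  then have "exp (\<i> * of_real x) ^ nat k = exp (of_nat (nat k) * (\<i> * of_real x))"
    by (simp only: exp_of_nat_mult)
  with True show ?thesis by (simp add: circle_power_def algebra_simps)
next
  case False
  then have "exp (- (\<i> * of_real x)) ^ nat (- k) = exp (of_nat (nat (- k)) * - (\<i> * of_real x))"
    by (simp only: exp_of_nat_mult)
  with False show ?thesis by (simp add: circle_power_def exp_cnj algebra_simps)
qed

lemma continuous_on_character:
  fixes n :: "'k::finite \<Rightarrow> int"
  shows "continuous_on S (character n)"
proof -
  have "continuous_on S (\<lambda>z. circle_power (z$i) k)" for i :: 'k and k
    unfolding circle_power_def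
    by (cases "0 \<le> k") (simp_all add: continuous_on_power continuous_on_component)
  then show ?thesis unfolding character_def by (intro continuous_on_prod)
qed

lemma character_add:
  "z \<in> torus \<Longrightarrow> character (\<lambda>i. n i + m i) z = character n z * character m z"
  unfolding character_def torus_def by (simp add: prod.distrib circle_power_add)

lemma character_zero: "character (\<lambda>i. 0) z = 1"
  by (simp add: character_def circle_power_def)

lemma norm_character: "z \<in> torus \<Longrightarrow> norm (character n z) = 1"
  unfolding character_def torus_def by (simp add: prod_norm[symmetric] norm_circle_power)

definition frequency :: "('k::finite \<Rightarrow> int) \<Rightarrow> ('k \<Rightarrow> real) \<Rightarrow> real" where
  "frequency n \<omega> = (\<Sum>i\<in>UNIV. of_int (n i) * \<omega> i)"

lemma character_clock_flow:
  "character n (clock_flow \<omega> t z) = exp (\<i> * of_real (2 * pi * frequency n \<omega> * t)) * character n z"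
proof -
  have "clock_flow \<omega> t z $ i = exp (\<i> * of_real (2 * pi * \<omega> i * t)) * z$i" for i
    by (simp add: clock_flow_def algebra_simps)
  then have "character n (clock_flow \<omega> t z) =
      (\<Prod>i\<in>UNIV. exp (\<i> * of_real (of_int (n i) * (2 * pi * \<omega> i * t))) * circle_power (z$i) (n i))"
    unfolding character_def by (simp only: circle_power_mult circle_power_cis)
  also have "\<dots> = exp (\<Sum>i\<in>UNIV. \<i> * of_real (of_int (n i) * (2 * pi * \<omega> i * t))) * character n z"
    by (simp add: prod.distrib exp_sum character_def)
  also have "(\<Sum>i\<in>UNIV. \<i> * of_real (of_int (n i) * (2 * pi * \<omega> i * t))) =
      \<i> * of_real (2 * pi * frequency n \<omega> * t)"
    by (simp add: frequency_def sum_distrib_left sum_distrib_right algebra_simps)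
  finally show ?thesis .
qed

lemma character_const_on_clock_set:
  assumes "frequency n \<omega> = 0" and "z \<in> clock_set \<omega> \<phi>"
  shows "character n z = character n (clock \<omega> \<phi> 0)"
proof -
  have "range (clock \<omega> \<phi>) \<subseteq> {z. character n z = character n (clock \<omega> \<phi> 0)}"
    using character_clock_flow[of n \<omega> _ "clock \<omega> \<phi> 0"] clock_flow_clock[of \<omega> _ \<phi> 0] assms(1)
    by auto
  moreover have "closed {z. character n z = character n (clock \<omega> \<phi> 0)}"
    by (intro closed_Collect_eq continuous_on_character continuous_on_const)
  ultimately have "clock_set \<omega> \<phi> \<subseteq> {z. character n z = character n (clock \<omega> \<phi> 0)}"
    unfolding clock_set_def by (rule closure_minimal)
  then show ?thesis using assms(2) by blast
qed

inductive trig_poly :: "(complex^'k::finite \<Rightarrow> complex) \<Rightarrow> bool" where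
  character: "trig_poly (\<lambda>z. c * character n z)"
| add: "trig_poly h \<Longrightarrow> trig_poly k \<Longrightarrow> trig_poly (\<lambda>z. h z + k z)"
| eq_on_torus: "trig_poly h \<Longrightarrow> (\<And>z. z \<in> torus \<Longrightarrow> k z = h z) \<Longrightarrow> trig_poly k"

lemma trig_poly_const: "trig_poly (\<lambda>z. c)"
  by (rule trig_poly.eq_on_torus[OF trig_poly.character[of c "\<lambda>i. 0"]]) (simp add: character_zero)

lemma trig_poly_cmult: "trig_poly h \<Longrightarrow> trig_poly (\<lambda>z. c * h z)"
proof (induction rule: trig_poly.induct)
  case (character d n)
  show ?case by (rule trig_poly.eq_on_torus[OF trig_poly.character[of "c * d" n]]) simp
next
  case (add h k)
  show ?case by (rule trig_poly.eq_on_torus[OF trig_poly.add[OF add.IH]]) (simp add: distrib_left)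
next
  case (eq_on_torus h k)
  then show ?case by (auto intro: trig_poly.eq_on_torus)
qed

lemma trig_poly_mult_character: "trig_poly h \<Longrightarrow> trig_poly (\<lambda>z. c * character n z * h z)"
proof (induction rule: trig_poly.induct)
  case (character d m)
  show ?case
    by (rule trig_poly.eq_on_torus[OF trig_poly.character[of "c * d" "\<lambda>i. n i + m i"]])
      (simp add: character_add)
next
  case (add h k)
  show ?case by (rule trig_poly.eq_on_torus[OF trig_poly.add[OF add.IH]]) (simp add: distrib_left)
next
  case (eq_on_torus h k)
  then show ?case by (auto intro: trig_poly.eq_on_torus)
qed

lemma trig_poly_mult: "trig_poly h \<Longrightarrow> trig_poly k \<Longrightarrow> trig_poly (\<lambda>z. h z * k z)"
proof (induction rule: trig_poly.induct)
  case (character c n)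
  then show ?case by (rule trig_poly_mult_character)
next
  case (add h1 h2)
  show ?case
    by (rule trig_poly.eq_on_torus[OF trig_poly.add[OF add.IH[OF add.prems]]]) (simp add: distrib_right)
next
  case (eq_on_torus h h')
  then show ?case by (auto intro: trig_poly.eq_on_torus)
qed

lemma trig_poly_sum: "finite I \<Longrightarrow> (\<And>i. i \<in> I \<Longrightarrow> trig_poly (h i)) \<Longrightarrow> trig_poly (\<lambda>z. \<Sum>i\<in>I. h i z)"
  by (induction I rule: finite_induct) (auto intro: trig_poly_const[of 0] trig_poly.add)

lemma trig_poly_component: "trig_poly (\<lambda>z. z$i)"
  by (rule trig_poly.eq_on_torus[OF trig_poly.character[of 1 "\<lambda>j. if j = i then 1 else 0"]])
    (simp add: character_def circle_power_def if_distrib prod.If_cases)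

lemma trig_poly_cnj_component: "trig_poly (\<lambda>z. cnj (z$i))"
  by (rule trig_poly.eq_on_torus[OF trig_poly.character[of 1 "\<lambda>j. if j = i then -1 else 0"]])
    (simp add: character_def circle_power_def if_distrib prod.If_cases)

lemma trig_poly_inner: "trig_poly (\<lambda>z. of_real (z \<bullet> b))"
proof -
  have "of_real (w \<bullet> c) = cnj c / 2 * w + c / 2 * cnj w" for w c :: complex
    by (simp add: inner_complex_def complex_eq_iff field_simps)
  then have "of_real (z \<bullet> b) = (\<Sum>i\<in>UNIV. cnj (b$i) / 2 * z$i + b$i / 2 * cnj (z$i))" for z :: "complex^'a"
    by (simp add: inner_vec_def)
  moreover have "trig_poly (\<lambda>z. \<Sum>i\<in>UNIV. cnj (b$i) / 2 * z$i + b$i / 2 * cnj (z$i))"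
    by (intro trig_poly_sum trig_poly.add trig_poly_cmult trig_poly_component trig_poly_cnj_component) simp
  ultimately show ?thesis by simp
qed

lemma trig_poly_real_polynomial:
  fixes p :: "complex^'k::finite \<Rightarrow> real"
  shows "real_polynomial_function p \<Longrightarrow> trig_poly (\<lambda>z. of_real (p z))"
proof (induction rule: real_polynomial_function.induct)
  case (linear f)
  then have "f z = z \<bullet> adjoint f 1" for z
    using adjoint_works[of f z 1] by (simp add: bounded_linear.linear)
  then show ?case using trig_poly_inner[of "adjoint f 1"] by simp
next
  case (const c)
  show ?case by (rule trig_poly_const)
next
  case (add f g)
  show ?case by (rule trig_poly.eq_on_torus[OF trig_poly.add[OF add.IH]]) simp
next
  case (mult f g)
  show ?case by (rule trig_poly.eq_on_torus[OF trig_poly_mult[OF mult.IH]]) simp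
qed

section \<open>Time averages along the clock\<close>

definition time_avg ::
    "('k::finite \<Rightarrow> real) \<Rightarrow> (complex^'k \<Rightarrow> 'b::real_normed_vector) \<Rightarrow> real \<Rightarrow> complex^'k \<Rightarrow> 'b" where
  "time_avg \<omega> h T z = (1 / T) *\<^sub>R integral {0..T} (\<lambda>t. h (clock_flow \<omega> t z))"

lemma integrable_on_clock_orbit:
  fixes h :: "complex^'k::finite \<Rightarrow> 'b::euclidean_space"
  assumes "continuous_on UNIV h"
  shows "(\<lambda>t. h (clock_flow \<omega> t z)) integrable_on {a..b}"
  by (intro integrable_continuous_interval continuous_on_compose2[OF assms] continuous_intros) auto

lemma time_avg_const: "T > 0 \<Longrightarrow> time_avg \<omega> (\<lambda>z. c) T z = c"
  by (simp add: time_avg_def)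

lemma time_avg_add:
  fixes h k :: "complex^'k::finite \<Rightarrow> 'b::euclidean_space"
  assumes "continuous_on UNIV h" "continuous_on UNIV k"
  shows "time_avg \<omega> (\<lambda>z. h z + k z) T z = time_avg \<omega> h T z + time_avg \<omega> k T z"
  by (simp add: time_avg_def integral_add integrable_on_clock_orbit assms scaleR_add_right)

lemma time_avg_diff:
  fixes h k :: "complex^'k::finite \<Rightarrow> 'b::euclidean_space"
  assumes "continuous_on UNIV h" "continuous_on UNIV k"
  shows "time_avg \<omega> (\<lambda>z. h z - k z) T z = time_avg \<omega> h T z - time_avg \<omega> k T z"
  by (simp add: time_avg_def integral_diff integrable_on_clock_orbit assms scaleR_diff_right)

lemma time_avg_bounded_linear:
  fixes h :: "complex^'k::finite \<Rightarrow> 'b::euclidean_space"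
  assumes "bounded_linear L" "continuous_on UNIV h"
  shows "time_avg \<omega> (\<lambda>z. L (h z)) T z = L (time_avg \<omega> h T z)"
  using integral_linear[OF integrable_on_clock_orbit[OF assms(2)] assms(1)]
  by (simp add: time_avg_def o_def linear_scale[OF bounded_linear.linear[OF assms(1)]])

lemma norm_time_avg_le:
  fixes h :: "complex^'k::finite \<Rightarrow> 'b::euclidean_space"
  assumes "continuous_on UNIV h" "T > 0" "\<And>t. norm (h (clock_flow \<omega> t z)) \<le> e"
  shows "norm (time_avg \<omega> h T z) \<le> e"
proof -
  have "norm (integral {0..T} (\<lambda>t. h (clock_flow \<omega> t z))) \<le> e * (T - 0)"
    using assms by (intro integral_bound continuous_on_compose2[OF assms(1)] continuous_intros) auto
  then show ?thesis using \<open>T > 0\<close> by (simp add: time_avg_def field_simps)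
qed

lemma has_integral_exp_mult_of_real:
  fixes a :: complex
  assumes "a \<noteq> 0" "0 \<le> T"
  shows "((\<lambda>t. exp (a * of_real t)) has_integral (exp (a * of_real T) - 1) / a) {0..T}"
proof -
  have "((\<lambda>u. exp (a * u) / a) has_field_derivative exp (a * of_real t)) (at (of_real t))" for t
    using assms by (auto intro!: derivative_eq_intros)
  then have "((\<lambda>t. exp (a * of_real t) / a) has_vector_derivative exp (a * of_real t))
      (at t within {0..T})" for t
    by (rule has_vector_derivative_real_field)
  from fundamental_theorem_of_calculus[OF \<open>0 \<le> T\<close> this]
  show ?thesis by (simp add: diff_divide_distrib)
qed

lemma norm_time_avg_character_le:
  assumes "frequency n \<omega> \<noteq> 0" and "z \<in> torus" and "T > 0"
  shows "norm (time_avg \<omega> (character n) T z) \<le> 1 / (pi * \<bar>frequency n \<omega>\<bar> * T)"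
proof -
  define a where "a = \<i> * of_real (2 * pi * frequency n \<omega>)"
  have "a \<noteq> 0" using assms(1) by (simp add: a_def)
  have flow: "character n (clock_flow \<omega> t z) = exp (a * of_real t) * character n z" for t
    using character_clock_flow[of n \<omega> t z] by (simp add: a_def mult.assoc)
  have "norm (character n z) = 1"
    using norm_character assms(2) by blast
  moreover have "integral {0..T} (\<lambda>t. character n (clock_flow \<omega> t z)) =
      (exp (a * of_real T) - 1) / a * character n z"
    using integral_unique[OF has_integral_exp_mult_of_real[OF \<open>a \<noteq> 0\<close>, of T]] \<open>T > 0\<close>
    by (simp add: flow)
  ultimately have "norm (time_avg \<omega> (character n) T z) = norm (exp (a * of_real T) - 1) / (norm a * T)"
    using \<open>T > 0\<close> by (simp add: time_avg_def norm_mult norm_divide)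
  also have "\<dots> \<le> 2 / (norm a * T)"
    using norm_triangle_ineq4[of "exp (a * of_real T)" 1] \<open>T > 0\<close>
    by (intro divide_right_mono) (simp_all add: a_def)
  also have "\<dots> = 1 / (pi * \<bar>frequency n \<omega>\<bar> * T)"
    by (simp add: a_def norm_mult)
  finally show ?thesis .
qed

text \<open>On the unit circle \<open>(z + 1/z)/2 = Re z\<close>, so \<open>G_Re G0\<close> extends \<open>G_of G0\<close>
  continuously from the torus.\<close>
definition G_Re :: "(real^'k::finite \<Rightarrow> 'b) \<Rightarrow> complex^'k \<Rightarrow> 'b" where
  "G_Re G0 z = G0 (\<chi> i. Re (z$i))"

lemma G_of_eq_on_torus:
  assumes "z \<in> torus"
  shows "G_of G0 z = G_Re G0 z"
proof -
  have "inverse (z$i) = cnj (z$i)" for i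
    using divide_conv_cnj[of "z$i" 1] assms by (simp add: torus_def inverse_eq_divide)
  then show ?thesis by (simp add: G_of_def G_Re_def)
qed

lemma continuous_on_G_Re: "continuous_on UNIV G0 \<Longrightarrow> continuous_on UNIV (G_Re G0)"
  unfolding G_Re_def by (erule continuous_on_compose2) (intro continuous_intros | simp)+

lemma borel_measurable_G_of:
  assumes "continuous_on UNIV G0"
  shows "G_of G0 \<in> borel_measurable borel"
proof -
  have "(\<lambda>z::complex^'k. (\<chi> i. Re ((z$i + inverse (z$i)) / 2)) :: real^'k) \<in> borel_measurable borel"
  proof (subst borel_measurable_euclidean_space, intro ballI)
    fix b :: "real^'k" assume "b \<in> Basis"
    then obtain i where b: "b = axis i 1" by (auto simp: Basis_vec_def)
    have "(\<lambda>w::complex. Re ((w + inverse w) / 2)) \<in> borel_measurable borel"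
      by measurable
    moreover have "(\<lambda>z::complex^'k. z$i) \<in> borel_measurable borel"
      by (intro borel_measurable_continuous_onI continuous_intros)
    ultimately have "(\<lambda>z::complex^'k. Re ((z$i + inverse (z$i)) / 2)) \<in> borel_measurable borel"
      using measurable_compose by blast
    then show "(\<lambda>z. (\<chi> i. Re ((z$i + inverse (z$i)) / 2)) \<bullet> b) \<in> borel_measurable borel"
      by (simp only: b inner_axis vec_lambda_beta inner_real_def mult_1_right)
  qed
  from measurable_compose[OF this borel_measurable_continuous_onI[OF assms]]
  show ?thesis by (simp add: G_of_def[abs_def] o_def)
qed

section \<open>Uniform ergodic theorem for the clock\<close>

locale invariant_clock_measure =
  fixes \<omega> \<phi> :: "'k::finite \<Rightarrow> real" and \<pi> :: "(complex^'k) measure"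
  assumes prob: "prob_space \<pi>" and sets_\<pi>: "sets \<pi> = sets borel"
    and clock_set_full: "emeasure \<pi> (clock_set \<omega> \<phi>) = 1"
    and flow_invariant: "\<And>t. distr \<pi> \<pi> (clock_flow \<omega> t) = \<pi>"
begin

sublocale prob_space \<pi> by (rule prob)

abbreviation \<Omega> :: "(complex^'k) set" where "\<Omega> \<equiv> clock_set \<omega> \<phi>"

abbreviation uniformly_ergodic :: "(complex^'k \<Rightarrow> 'b::euclidean_space) \<Rightarrow> bool" where
  "uniformly_ergodic h \<equiv> uniform_limit \<Omega> (time_avg \<omega> h) (\<lambda>_. integral\<^sup>L \<pi> h) at_top"

lemma AE_in_clock_set: "AE z in \<pi>. z \<in> \<Omega>"
  using clock_set_full measure_eq_emeasure_eq_ennreal[of 1 \<pi> \<Omega>] by (intro AE_prob_1) simp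

lemma borel_measurable_continuous: "continuous_on UNIV h \<Longrightarrow> h \<in> borel_measurable \<pi>"
  using borel_measurable_continuous_onI measurable_cong_sets[OF sets_\<pi> refl] by blast

lemma integrable_continuous:
  fixes h :: "complex^'k \<Rightarrow> 'b::euclidean_space"
  assumes "continuous_on UNIV h"
  shows "integrable \<pi> h"
proof -
  have "bounded (h ` \<Omega>)"
    by (intro compact_imp_bounded compact_continuous_image continuous_on_subset[OF assms]
        compact_clock_set subset_UNIV)
  then obtain B where B: "\<forall>z\<in>\<Omega>. norm (h z) \<le> B"
    unfolding bounded_iff by blast
  have "AE z in \<pi>. norm (h z) \<le> B"
    using AE_in_clock_set by eventually_elim (use B in blast)
  then show ?thesis
    by (rule integrable_const_bound) (rule borel_measurable_continuous[OF assms])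
qed

lemma norm_integral_le:
  fixes h :: "complex^'k \<Rightarrow> 'b::euclidean_space"
  assumes "continuous_on UNIV h" "\<forall>z\<in>\<Omega>. norm (h z) \<le> e"
  shows "norm (integral\<^sup>L \<pi> h) \<le> e"
proof -
  have "norm (integral\<^sup>L \<pi> h) \<le> (\<integral>z. norm (h z) \<partial>\<pi>)"
    by (rule integral_norm_bound)
  also have "\<dots> \<le> e"
  proof (rule integral_le_const)
    show "integrable \<pi> (\<lambda>z. norm (h z))"
      by (intro integrable_continuous continuous_on_norm assms(1))
    show "AE z in \<pi>. norm (h z) \<le> e"
      using AE_in_clock_set by eventually_elim (use assms(2) in blast)
  qed
  finally show ?thesis .
qed

lemma time_avg_error_diff_le:
  fixes h k :: "complex^'k \<Rightarrow> 'b::euclidean_space"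
  assumes h: "continuous_on UNIV h" and k: "continuous_on UNIV k"
    and close: "\<forall>z\<in>\<Omega>. norm (h z - k z - c) \<le> e" and "T > 0" and "z \<in> \<Omega>"
  shows "norm ((time_avg \<omega> h T z - integral\<^sup>L \<pi> h) - (time_avg \<omega> k T z - integral\<^sup>L \<pi> k)) \<le> 2 * e"
proof -
  define d where "d z = h z - k z - c" for z
  have hk: "continuous_on UNIV (\<lambda>z. h z - k z)" by (intro continuous_intros h k)
  then have d: "continuous_on UNIV d" unfolding d_def by (rule continuous_on_diff[OF _ continuous_on_const])
  have avg: "time_avg \<omega> d T z = time_avg \<omega> h T z - time_avg \<omega> k T z - c"
    using \<open>T > 0\<close> unfolding d_def
    by (simp add: time_avg_diff[OF hk continuous_on_const] time_avg_diff[OF h k] time_avg_const)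
  have int: "integral\<^sup>L \<pi> d = integral\<^sup>L \<pi> h - integral\<^sup>L \<pi> k - c"
    unfolding d_def by (simp add: integrable_continuous[OF hk] integrable_continuous h k prob_space)
  have "norm ((time_avg \<omega> h T z - integral\<^sup>L \<pi> h) - (time_avg \<omega> k T z - integral\<^sup>L \<pi> k)) =
      norm (time_avg \<omega> d T z - integral\<^sup>L \<pi> d)"
    by (simp add: avg int algebra_simps)
  also have "\<dots> \<le> norm (time_avg \<omega> d T z) + norm (integral\<^sup>L \<pi> d)"
    by (rule norm_triangle_ineq4)
  also have "norm (time_avg \<omega> d T z) \<le> e"
    using close clock_flow_in_clock_set[OF \<open>z \<in> \<Omega>\<close>] \<open>T > 0\<close>
    by (intro norm_time_avg_le d) (auto simp: d_def)
  also have "norm (integral\<^sup>L \<pi> d) \<le> e"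
    using close by (intro norm_integral_le d) (auto simp: d_def)
  finally show ?thesis by simp
qed

lemma uniformly_ergodic_approx:
  fixes h :: "complex^'k \<Rightarrow> 'b::euclidean_space"
  assumes h: "continuous_on UNIV h"
    and approx: "\<And>e. e > 0 \<Longrightarrow>
      \<exists>k. continuous_on UNIV k \<and> uniformly_ergodic k \<and> (\<forall>z\<in>\<Omega>. norm (h z - k z) \<le> e)"
  shows "uniformly_ergodic h"
proof (rule uniform_limitI)
  fix e :: real assume "e > 0"
  then have e3: "e / 3 > 0" by simp
  obtain k where k: "continuous_on UNIV k" "uniformly_ergodic k"
    and "\<forall>z\<in>\<Omega>. norm (h z - k z) \<le> e / 3"
    using approx[OF e3] by blast
  then have hk: "\<forall>z\<in>\<Omega>. norm (h z - k z - 0) \<le> e / 3" by simp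
  have "\<forall>\<^sub>F T in at_top. \<forall>z\<in>\<Omega>. dist (time_avg \<omega> k T z) (integral\<^sup>L \<pi> k) < e / 3"
    by (rule uniform_limitD[OF k(2)]) (use \<open>e > 0\<close> in simp)
  then show "\<forall>\<^sub>F T in at_top. \<forall>z\<in>\<Omega>. dist (time_avg \<omega> h T z) (integral\<^sup>L \<pi> h) < e"
    using eventually_gt_at_top[of 0]
  proof eventually_elim
    case (elim T)
    show ?case
    proof
      fix z assume "z \<in> \<Omega>"
      have "norm (time_avg \<omega> k T z - integral\<^sup>L \<pi> k) < e / 3"
        using elim(1) \<open>z \<in> \<Omega>\<close> by (simp add: dist_norm)
      moreover note time_avg_error_diff_le[OF h k(1) hk \<open>T > 0\<close> \<open>z \<in> \<Omega>\<close>]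
      ultimately show "dist (time_avg \<omega> h T z) (integral\<^sup>L \<pi> h) < e"
        using norm_triangle_sub[of "time_avg \<omega> h T z - integral\<^sup>L \<pi> h"
            "time_avg \<omega> k T z - integral\<^sup>L \<pi> k"]
        by (simp only: dist_norm)
    qed
  qed
qed

lemma uniformly_ergodic_const: "uniformly_ergodic (\<lambda>_. c)"
proof -
  have "\<forall>\<^sub>F T in at_top. \<forall>z\<in>\<Omega>. c = time_avg \<omega> (\<lambda>_. c) T z"
    by (intro eventually_mono[OF eventually_gt_at_top[of 0]]) (simp add: time_avg_const)
  from uniform_limit_cong[OF this, of "\<lambda>_. c" "\<lambda>_. integral\<^sup>L \<pi> (\<lambda>_. c)"]
  show ?thesis by (simp add: prob_space uniform_limit_const)
qed

lemma uniformly_ergodic_cong: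
  fixes h k :: "complex^'k \<Rightarrow> 'b::euclidean_space"
  assumes "continuous_on UNIV h" "continuous_on UNIV k" "\<forall>z\<in>\<Omega>. h z = k z" "uniformly_ergodic k"
  shows "uniformly_ergodic h"
  using assms by (intro uniformly_ergodic_approx) auto

lemma uniformly_ergodic_add:
  fixes h k :: "complex^'k \<Rightarrow> 'b::euclidean_space"
  assumes "continuous_on UNIV h" "continuous_on UNIV k" "uniformly_ergodic h" "uniformly_ergodic k"
  shows "uniformly_ergodic (\<lambda>z. h z + k z)"
proof -
  have "time_avg \<omega> (\<lambda>z. h z + k z) = (\<lambda>T z. time_avg \<omega> h T z + time_avg \<omega> k T z)"
    by (simp add: fun_eq_iff time_avg_add assms(1,2))
  with uniform_limit_add[OF assms(3,4)] show ?thesis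
    by (simp add: integrable_continuous assms(1,2))
qed

lemma uniformly_ergodic_sum:
  fixes h :: "'i \<Rightarrow> complex^'k \<Rightarrow> 'b::euclidean_space"
  assumes "finite I" "\<And>i. i \<in> I \<Longrightarrow> continuous_on UNIV (h i) \<and> uniformly_ergodic (h i)"
  shows "uniformly_ergodic (\<lambda>z. \<Sum>i\<in>I. h i z)"
  using assms
proof (induction I rule: finite_induct)
  case empty
  show ?case using uniformly_ergodic_const[of 0] by simp
next
  case (insert i I)
  have "uniformly_ergodic (\<lambda>z. h i z + (\<Sum>j\<in>I. h j z))"
    using insert by (intro uniformly_ergodic_add continuous_intros) auto
  then show ?case using insert.hyps by simp
qed

lemma uniformly_ergodic_bounded_linear:
  fixes h :: "complex^'k \<Rightarrow> 'b::euclidean_space"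
  assumes "bounded_linear L" "continuous_on UNIV h" "uniformly_ergodic h"
  shows "uniformly_ergodic (\<lambda>z. L (h z))"
proof -
  have "time_avg \<omega> (\<lambda>z. L (h z)) = (\<lambda>T z. L (time_avg \<omega> h T z))"
    by (simp add: fun_eq_iff time_avg_bounded_linear assms(1,2))
  with bounded_linear.uniform_limit[OF assms(1,3)] show ?thesis
    by (simp add: integral_bounded_linear integrable_continuous assms(1,2))
qed

lemma integral_character_eq_0:
  assumes "frequency n \<omega> \<noteq> 0"
  shows "integral\<^sup>L \<pi> (character n) = 0"
proof -
  define t where "t = 1 / (2 * frequency n \<omega>)"
  have flip: "character n (clock_flow \<omega> t z) = - character n z" for z
    using assms by (simp add: character_clock_flow t_def)
  have "integral\<^sup>L \<pi> (character n) = integral\<^sup>L (distr \<pi> \<pi> (clock_flow \<omega> t)) (character n)"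
    by (simp add: flow_invariant)
  also have "\<dots> = integral\<^sup>L \<pi> (\<lambda>z. character n (clock_flow \<omega> t z))"
    by (intro integral_distr borel_measurable_continuous continuous_on_character)
      (simp add: measurable_cong_sets[OF sets_\<pi> sets_\<pi>] continuous_on_clock_flow
        borel_measurable_continuous_onI)
  also have "\<dots> = - integral\<^sup>L \<pi> (character n)"
    by (simp add: flip)
  finally show ?thesis by simp
qed

lemma uniformly_ergodic_character: "uniformly_ergodic (character n)"
proof (cases "frequency n \<omega> = 0")
  case True
  then have "\<forall>z\<in>\<Omega>. character n z = character n (clock \<omega> \<phi> 0)"
    by (blast intro: character_const_on_clock_set)
  then show ?thesis
    by (intro uniformly_ergodic_cong[OF continuous_on_character continuous_on_const _ uniformly_ergodic_const])
next
  case False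
  have "\<forall>z\<in>\<Omega>. norm (time_avg \<omega> (character n) T z - 0) \<le> 1 / (pi * \<bar>frequency n \<omega>\<bar>) / T"
    if "T > 0" for T
    using norm_time_avg_character_le[OF False _ that] clock_set_subset_torus by auto
  then have "uniform_limit \<Omega> (\<lambda>T z. time_avg \<omega> (character n) T z - 0) (\<lambda>_. 0) at_top"
    by (intro uniform_limit_inverse_decay eventually_mono[OF eventually_gt_at_top[of 0]])
  then show ?thesis
    using integral_character_eq_0[OF False] by simp
qed

lemma trig_poly_uniformly_ergodic:
  "trig_poly h \<Longrightarrow> \<exists>k. continuous_on UNIV k \<and> (\<forall>z\<in>torus. k z = h z) \<and> uniformly_ergodic k"
proof (induction rule: trig_poly.induct)
  case (character c n)
  show ?case
  proof (intro exI[of _ "\<lambda>z. c * character n z"] conjI)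
    show "continuous_on UNIV (\<lambda>z. c * character n z)"
      by (intro continuous_intros continuous_on_character)
    show "uniformly_ergodic (\<lambda>z. c * character n z)"
      using bounded_linear_mult_right continuous_on_character uniformly_ergodic_character
      by (rule uniformly_ergodic_bounded_linear)
  qed simp
next
  case (add h k)
  then obtain h' k' where h': "continuous_on UNIV h'" "\<forall>z\<in>torus. h' z = h z" "uniformly_ergodic h'"
    and k': "continuous_on UNIV k'" "\<forall>z\<in>torus. k' z = k z" "uniformly_ergodic k'"
    by blast
  show ?case
  proof (intro exI[of _ "\<lambda>z. h' z + k' z"] conjI)
    show "continuous_on UNIV (\<lambda>z. h' z + k' z)" by (intro continuous_intros h'(1) k'(1))
    show "\<forall>z\<in>torus. h' z + k' z = h z + k z" using h'(2) k'(2) by simp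
    show "uniformly_ergodic (\<lambda>z. h' z + k' z)" by (rule uniformly_ergodic_add) fact+
  qed
next
  case (eq_on_torus h k)
  then show ?case by simp
qed

lemma uniformly_ergodic_real_polynomial:
  fixes p :: "complex^'k \<Rightarrow> real"
  assumes "real_polynomial_function p"
  shows "uniformly_ergodic p"
proof -
  have p: "continuous_on UNIV p"
    using assms by (simp add: real_polynomial_function_eq continuous_on_polymonial_function)
  obtain k where k: "continuous_on UNIV k" "\<forall>z\<in>torus. k z = complex_of_real (p z)" "uniformly_ergodic k"
    using trig_poly_uniformly_ergodic[OF trig_poly_real_polynomial[OF assms]] by blast
  have cp: "continuous_on UNIV (\<lambda>z. complex_of_real (p z))" by (intro continuous_intros p)
  have "uniformly_ergodic (\<lambda>z. complex_of_real (p z))"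
    using k(2) clock_set_subset_torus[of \<omega> \<phi>]
    by (intro uniformly_ergodic_cong[OF cp k(1) _ k(3)]) auto
  from uniformly_ergodic_bounded_linear[OF bounded_linear_Re cp this]
  show ?thesis by simp
qed

lemma uniformly_ergodic_polynomial:
  fixes g :: "complex^'k \<Rightarrow> 'b::euclidean_space"
  assumes "polynomial_function g"
  shows "uniformly_ergodic g"
proof -
  have g: "continuous_on UNIV g" using assms by (rule continuous_on_polymonial_function)
  have "uniformly_ergodic (\<lambda>z. \<Sum>b\<in>Basis. (g z \<bullet> b) *\<^sub>R b)"
  proof (rule uniformly_ergodic_sum[OF finite_Basis], intro conjI)
    fix b :: 'b assume "b \<in> Basis"
    then have "real_polynomial_function (\<lambda>z. g z \<bullet> b)"
      using assms by (simp add: polynomial_function_iff_Basis_inner)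
    then show "uniformly_ergodic (\<lambda>z. (g z \<bullet> b) *\<^sub>R b)"
      by (rule uniformly_ergodic_bounded_linear[OF bounded_linear_scaleR_left
            continuous_on_inner[OF g continuous_on_const] uniformly_ergodic_real_polynomial])
    show "continuous_on UNIV (\<lambda>z. (g z \<bullet> b) *\<^sub>R b)" by (intro continuous_intros g)
  qed
  then show ?thesis by (simp add: euclidean_representation)
qed

theorem uniformly_ergodic_continuous:
  fixes h :: "complex^'k \<Rightarrow> 'b::euclidean_space"
  assumes "continuous_on UNIV h"
  shows "uniformly_ergodic h"
proof (rule uniformly_ergodic_approx[OF assms])
  fix e :: real assume "e > 0"
  then obtain g where "polynomial_function g" "\<forall>z\<in>\<Omega>. norm (h z - g z) < e"
    using Stone_Weierstrass_polynomial_function[OF compact_clock_set continuous_on_subset[OF assms]]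
    by blast
  then show "\<exists>k. continuous_on UNIV k \<and> uniformly_ergodic k \<and> (\<forall>z\<in>\<Omega>. norm (h z - k z) \<le> e)"
    by (intro exI[of _ g]) (auto intro: continuous_on_polymonial_function uniformly_ergodic_polynomial less_imp_le)
qed

lemma uniform_limit_time_avg_family:
  fixes h :: "'p \<Rightarrow> complex^'k \<Rightarrow> 'b::euclidean_space"
  assumes cont: "\<And>\<theta>. continuous_on UNIV (h \<theta>)"
    and net: "\<And>e. e > 0 \<Longrightarrow> \<exists>\<Theta>. finite \<Theta> \<and> (\<forall>\<theta>. \<exists>\<theta>'\<in>\<Theta>. \<exists>c. \<forall>z\<in>\<Omega>. norm (h \<theta> z - h \<theta>' z - c) \<le> e)"
  shows "uniform_limit (UNIV \<times> \<Omega>) (\<lambda>T (\<theta>, z). time_avg \<omega> (h \<theta>) T z - integral\<^sup>L \<pi> (h \<theta>)) (\<lambda>_. 0) at_top"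
proof (rule uniform_limitI)
  fix e :: real assume "e > 0"
  then have "e / 4 > 0" by simp
  from net[OF this] obtain \<Theta> where "finite \<Theta>"
    and \<Theta>: "\<forall>\<theta>. \<exists>\<theta>'\<in>\<Theta>. \<exists>c. \<forall>z\<in>\<Omega>. norm (h \<theta> z - h \<theta>' z - c) \<le> e / 4"
    by blast
  have "\<forall>\<^sub>F T in at_top. \<forall>\<theta>'\<in>\<Theta>. \<forall>z\<in>\<Omega>. dist (time_avg \<omega> (h \<theta>') T z) (integral\<^sup>L \<pi> (h \<theta>')) < e / 2"
    using \<open>finite \<Theta>\<close> \<open>e > 0\<close>
    by (intro eventually_ball_finite ballI uniform_limitD[OF uniformly_ergodic_continuous[OF cont]]) auto
  then show "\<forall>\<^sub>F T in at_top. \<forall>p\<in>UNIV \<times> \<Omega>.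
      dist ((\<lambda>(\<theta>, z). time_avg \<omega> (h \<theta>) T z - integral\<^sup>L \<pi> (h \<theta>)) p) 0 < e"
    using eventually_gt_at_top[of 0]
  proof eventually_elim
    case (elim T)
    show ?case
    proof
      fix p :: "'p \<times> (complex^'k)" assume "p \<in> UNIV \<times> \<Omega>"
      then obtain \<theta> z where p: "p = (\<theta>, z)" and "z \<in> \<Omega>" by blast
      obtain \<theta>' c where "\<theta>' \<in> \<Theta>" and close: "\<forall>z\<in>\<Omega>. norm (h \<theta> z - h \<theta>' z - c) \<le> e / 4"
        using \<Theta> by blast
      have "norm ((time_avg \<omega> (h \<theta>) T z - integral\<^sup>L \<pi> (h \<theta>)) -
          (time_avg \<omega> (h \<theta>') T z - integral\<^sup>L \<pi> (h \<theta>'))) \<le> 2 * (e / 4)"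
        by (rule time_avg_error_diff_le[OF cont cont close \<open>T > 0\<close> \<open>z \<in> \<Omega>\<close>])
      moreover have "norm (time_avg \<omega> (h \<theta>') T z - integral\<^sup>L \<pi> (h \<theta>')) < e / 2"
        using elim(1) \<open>\<theta>' \<in> \<Theta>\<close> \<open>z \<in> \<Omega>\<close> by (simp add: dist_norm)
      ultimately show "dist ((\<lambda>(\<theta>, z). time_avg \<omega> (h \<theta>) T z - integral\<^sup>L \<pi> (h \<theta>)) p) 0 < e"
        using norm_triangle_sub[of "time_avg \<omega> (h \<theta>) T z - integral\<^sup>L \<pi> (h \<theta>)"
            "time_avg \<omega> (h \<theta>') T z - integral\<^sup>L \<pi> (h \<theta>')"]
        unfolding p dist_norm by simp
    qed
  qed
qed

lemma integral_G_of:
  assumes G0: "continuous_on UNIV G0" and g: "continuous_on UNIV g"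
  shows "integral\<^sup>L \<pi> (\<lambda>z. g (G_of G0 z)) = integral\<^sup>L \<pi> (\<lambda>z. g (G_Re G0 z))"
proof (rule integral_cong_AE)
  show "(\<lambda>z. g (G_of G0 z)) \<in> borel_measurable \<pi>"
    using measurable_compose[OF borel_measurable_G_of[OF G0] borel_measurable_continuous_onI[OF g]]
      measurable_cong_sets[OF sets_\<pi> refl] by blast
  show "(\<lambda>z. g (G_Re G0 z)) \<in> borel_measurable \<pi>"
    by (intro borel_measurable_continuous continuous_on_compose2[OF g continuous_on_G_Re[OF G0]]) auto
  show "AE z in \<pi>. g (G_of G0 z) = g (G_Re G0 z)"
    using AE_in_clock_set
    by eventually_elim (simp add: G_of_eq_on_torus subsetD[OF clock_set_subset_torus])
qed

lemma uniform_law_of_large_numbers: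
  fixes f :: "'p \<Rightarrow> real^'m \<Rightarrow> 'b::euclidean_space" and G0 :: "real^'k \<Rightarrow> real^'m"
  assumes G0: "continuous_on UNIV G0" and f: "\<And>\<theta>. continuous_on UNIV (f \<theta>)"
    and f_lipschitz: "\<And>\<theta> \<xi> \<xi>'. norm (f \<theta> \<xi> - f \<theta> \<xi>') \<le> L * dist \<xi> \<xi>'"
  shows "uniform_limit (UNIV \<times> \<Omega>) (\<lambda>T (\<theta>, z). (1 / T) *\<^sub>R integral {0..T}
      (\<lambda>t. f \<theta> (G_of G0 (clock_flow \<omega> t z)) - integral\<^sup>L \<pi> (\<lambda>z. f \<theta> (G_of G0 z)))) (\<lambda>_. 0) at_top"
proof -
  define H where "H \<theta> z = f \<theta> (G_Re G0 z)" for \<theta> z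
  have H: "continuous_on UNIV (H \<theta>)" for \<theta>
    unfolding H_def by (rule continuous_on_compose2[OF f continuous_on_G_Re[OF G0]]) auto
  have lim: "uniform_limit (UNIV \<times> \<Omega>)
      (\<lambda>T (\<theta>, z). time_avg \<omega> (H \<theta>) T z - integral\<^sup>L \<pi> (H \<theta>)) (\<lambda>_. 0) at_top"
  proof (rule uniform_limit_time_avg_family[OF H])
    fix e :: real assume "e > 0"
    show "\<exists>\<Theta>. finite \<Theta> \<and> (\<forall>\<theta>. \<exists>\<theta>'\<in>\<Theta>. \<exists>c. \<forall>z\<in>\<Omega>. norm (H \<theta> z - H \<theta>' z - c) \<le> e)"
      by (rule finite_net_modulo_constants[where L = L, OF compact_clock_set
            continuous_on_subset[OF continuous_on_G_Re[OF G0] subset_UNIV] _ \<open>e > 0\<close>])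
        (simp add: H_def f_lipschitz)
  qed
  have avg_eq: "(1 / T) *\<^sub>R integral {0..T}
      (\<lambda>t. f \<theta> (G_of G0 (clock_flow \<omega> t z)) - integral\<^sup>L \<pi> (\<lambda>z. f \<theta> (G_of G0 z))) =
      time_avg \<omega> (H \<theta>) T z - integral\<^sup>L \<pi> (H \<theta>)" if "T > 0" "z \<in> \<Omega>" for T \<theta> z
  proof -
    have "G_of G0 (clock_flow \<omega> t z) = G_Re G0 (clock_flow \<omega> t z)" for t
      using clock_flow_in_clock_set[OF \<open>z \<in> \<Omega>\<close>] clock_set_subset_torus
      by (blast intro: G_of_eq_on_torus)
    then have "integral {0..T} (\<lambda>t. f \<theta> (G_of G0 (clock_flow \<omega> t z)) - integral\<^sup>L \<pi> (H \<theta>)) =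
        integral {0..T} (\<lambda>t. H \<theta> (clock_flow \<omega> t z) - integral\<^sup>L \<pi> (H \<theta>))"
      by (simp add: H_def)
    also have "\<dots> = integral {0..T} (\<lambda>t. H \<theta> (clock_flow \<omega> t z)) - T *\<^sub>R integral\<^sup>L \<pi> (H \<theta>)"
      using \<open>T > 0\<close> by (simp add: integral_diff[OF integrable_on_clock_orbit[OF H] integrable_const_ivl])
    moreover have "integral\<^sup>L \<pi> (\<lambda>z. f \<theta> (G_of G0 z)) = integral\<^sup>L \<pi> (H \<theta>)"
      by (simp add: integral_G_of[OF G0 f] H_def[abs_def])
    ultimately show ?thesis
      using \<open>T > 0\<close> by (simp add: time_avg_def scaleR_diff_right)
  qed
  have "\<forall>\<^sub>F T in at_top. \<forall>p\<in>UNIV \<times> \<Omega>.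
      (\<lambda>(\<theta>, z). time_avg \<omega> (H \<theta>) T z - integral\<^sup>L \<pi> (H \<theta>)) p =
      (\<lambda>(\<theta>, z). (1 / T) *\<^sub>R integral {0..T}
        (\<lambda>t. f \<theta> (G_of G0 (clock_flow \<omega> t z)) - integral\<^sup>L \<pi> (\<lambda>z. f \<theta> (G_of G0 z)))) p"
    using eventually_gt_at_top[of 0] by eventually_elim (auto simp: avg_eq)
  from uniform_limit_cong[OF this, of "\<lambda>_. 0" "\<lambda>_. 0"] lim show ?thesis
    by simp
qed

end

theorem proposition2p2:
  fixes f :: "real^'d \<Rightarrow> real^'m \<Rightarrow> real^'d"
    and G0 :: "real^'k::finite \<Rightarrow> real^'m"
    and \<omega> \<phi> :: "'k \<Rightarrow> real"
    and \<pi> :: "(complex^'k) measure"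
    and L\<^sub>f :: real
  defines "\<Omega> \<equiv> clock_set \<omega> \<phi>"
    and "G \<equiv> G_of G0"
    and "fbar \<equiv> (\<lambda>\<theta>. integral\<^sup>L \<pi> (\<lambda>z. f \<theta> (G_of G0 z)))"
  assumes f_cont: "continuous_on UNIV (\<lambda>(\<theta>, \<xi>). f \<theta> \<xi>)"
    and \<omega>_pos: "\<forall>i. \<omega> i > 0"
    and A0a_analytic: "real_analytic G0"
    and A0a_summable: "taylor_abs_summable G0"
    and \<pi>_prob: "prob_space \<pi>"
    and \<pi>_sets: "sets \<pi> = sets borel"
    and \<pi>_on_\<Omega>: "emeasure \<pi> \<Omega> = 1"
    and \<pi>_invariant: "\<forall>t. distr \<pi> \<pi> (clock_flow \<omega> t) = \<pi>"
    and A1_fbar: "\<forall>\<theta> \<theta>'. norm (fbar \<theta>' - fbar \<theta>) \<le> L\<^sub>f * norm (\<theta>' - \<theta>)"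
    and A1_f: "\<forall>\<theta> \<theta>' \<xi> \<xi>'. norm (f \<theta>' \<xi> - f \<theta> \<xi>) + norm (f \<theta> \<xi>' - f \<theta> \<xi>)
                  \<le> L\<^sub>f * (norm (\<theta>' - \<theta>) + norm (\<xi>' - \<xi>))"
  shows "((\<lambda>T. SUP p\<in>(UNIV :: (real^'d) set) \<times> \<Omega>.
            ereal (norm ((1 / T) *\<^sub>R integral {0..T}
                     (\<lambda>t. f (fst p) (G (clock_flow \<omega> t (snd p))) - fbar (fst p)))
                   / (1 + norm (fst p))))
          \<longlongrightarrow> 0) at_top"
proof -
  interpret invariant_clock_measure \<omega> \<phi> \<pi>
    using \<pi>_prob \<pi>_sets \<pi>_on_\<Omega> \<pi>_invariant unfolding \<Omega>_def
    by (intro invariant_clock_measure.intro) simp_all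
  have f_\<theta>: "continuous_on UNIV (f \<theta>)" for \<theta>
    using continuous_on_compose2[OF f_cont continuous_on_Pair[OF continuous_on_const continuous_on_id]]
    by simp
  have f_lipschitz: "norm (f \<theta> \<xi> - f \<theta> \<xi>') \<le> L\<^sub>f * dist \<xi> \<xi>'" for \<theta> \<xi> \<xi>'
    using A1_f[THEN spec[of _ \<theta>], THEN spec[of _ \<theta>], THEN spec[of _ \<xi>'], THEN spec[of _ \<xi>]]
    by (simp add: dist_norm)
  have weight: "\<bar>norm a / (1 + norm \<theta>)\<bar> \<le> norm a" for a \<theta> :: "real^'d"
    using divide_left_mono[of 1 "1 + norm \<theta>" "norm a"] by (simp add: add_pos_nonneg)
  from uniform_law_of_large_numbers[where f = f and L = L\<^sub>f,
      OF real_analytic_continuous[OF A0a_analytic] f_\<theta> f_lipschitz]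
  show ?thesis unfolding \<Omega>_def
  proof (rule tendsto_SUP_ereal_zero_dominated)
    show "UNIV \<times> clock_set \<omega> \<phi> \<noteq> {}" using clock_in_clock_set by blast
  qed (simp only: G_def fbar_def case_prod_beta weight, simp)
qed

end
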